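(* For every $L\ge k_1+4\epsilon$ there is a number $\kappa(L)$ such that for all vertices $a,b$ of $\mathcal{CG}(\Sigma)$ with $d(a,b)\le 3L$, the pair $(a,b)$ has at most $\kappa(L)$ distinct $L$-channels.
   Context: $\Sigma$ is a compact orientable surface, $\mathcal{CG}(\Sigma)$ its curve graph (1-skeleton of Harvey's curve complex) with path metric $d$ (edges of length 1); $\delta\in\mathbb{N}$ is a hyperbolicity constant for it. Tight geodesics are those of Masur–Minsky/Bowditch. $\lambda=1000\delta$ and $\epsilon$ is a positive integer such that any $\lambda$-quasi-geodesic in $\mathcal{CG}(\Sigma)$ stays within $\epsilon$ of any geodesic joining its endpoints. Bowditch's constant $k_1$ (depending only on $\Sigma$) is such that, for some $K_1$ depending only on $\Sigma$: if $a,b$ are vertices, $r\in\mathbb{N}$, and $c$ lies on a tight geodesic from $a$ to $b$ with $d(a,c)\ge r+k_1$ and $d(b,c)\ge r+k_1$, then the set of vertices on tight geodesics between two points respectively $r$-close to $a$ and $b$, at distance at most $2\epsilon$ from $c$, has at most $K_1$ elements. Definition: for $L>0$ and vertices $a,b$ with $d(a,b)\le 3L$, an $L$-channel of $(a,b)$ is a tight geodesic $g_1$ of length $L$ which is contained in a tight geodesic $g_2$ of length $3L$ that starts at distance at most $2\epsilon$ from $a$ and ends at distance at most $2\epsilon$ from $b$, such that the endpoints of $g_2$ are at distance $L$ from $g_1$. *)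

theory Defs
  imports Complex_Main "HOL-Library.Sublist"
begin

text \<open>Abstract setting: the curve graph is given by its vertex type 'v and adjacency
relation E; tight geodesics by an abstract predicate on vertex lists.
A path / geodesic is a nonempty list of vertices; its length is the number of edges.\<close>

definition walk :: "('v \<Rightarrow> 'v \<Rightarrow> bool) \<Rightarrow> 'v list \<Rightarrow> bool" where
  "walk E p \<longleftrightarrow> p \<noteq> [] \<and> (\<forall>i. Suc i < length p \<longrightarrow> E (p ! i) (p ! Suc i))"

definition gdist :: "('v \<Rightarrow> 'v \<Rightarrow> bool) \<Rightarrow> 'v \<Rightarrow> 'v \<Rightarrow> nat" where
  "gdist E x y = (LEAST n. \<exists>p. walk E p \<and> hd p = x \<and> last p = y \<and> length p = Suc n)"

definition geodesic :: "('v \<Rightarrow> 'v \<Rightarrow> bool) \<Rightarrow> 'v list \<Rightarrow> bool" where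
  "geodesic E p \<longleftrightarrow> walk E p \<and> length p - 1 = gdist E (hd p) (last p)"

definition setdist :: "('v \<Rightarrow> 'v \<Rightarrow> bool) \<Rightarrow> 'v \<Rightarrow> 'v set \<Rightarrow> nat" where
  "setdist E v S = Min (gdist E v ` S)"

definition gromov_hyperbolic :: "('v \<Rightarrow> 'v \<Rightarrow> bool) \<Rightarrow> nat \<Rightarrow> bool" where
  "gromov_hyperbolic E \<delta> \<longleftrightarrow> (\<forall>x y z w.
      gdist E x y + gdist E z w
        \<le> max (gdist E x z + gdist E y w) (gdist E x w + gdist E y z) + 2 * \<delta>)"

text \<open>A (discrete) lam-quasi-geodesic: a vertex sequence p with
  |i-j|/lam - lam \<le> d(p_i,p_j) \<le> lam |i-j| + lam (lower bound written multiplied by lam).\<close>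
definition quasi_geodesic :: "('v \<Rightarrow> 'v \<Rightarrow> bool) \<Rightarrow> real \<Rightarrow> 'v list \<Rightarrow> bool" where
  "quasi_geodesic E lam p \<longleftrightarrow> p \<noteq> [] \<and> (\<forall>i j. i < length p \<and> j < length p \<longrightarrow>
      real (gdist E (p ! i) (p ! j)) \<le> lam * \<bar>real i - real j\<bar> + lam \<and>
      \<bar>real i - real j\<bar> \<le> lam * (real (gdist E (p ! i) (p ! j)) + lam))"

definition qg_stable :: "('v \<Rightarrow> 'v \<Rightarrow> bool) \<Rightarrow> real \<Rightarrow> nat \<Rightarrow> bool" where
  "qg_stable E lam \<epsilon> \<longleftrightarrow> (\<forall>p g. quasi_geodesic E lam p \<and> geodesic E g \<and>
      hd g = hd p \<and> last g = last p \<longrightarrow> (\<forall>v\<in>set p. \<exists>w\<in>set g. gdist E v w \<le> \<epsilon>))"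

definition bowditch_property ::
  "('v \<Rightarrow> 'v \<Rightarrow> bool) \<Rightarrow> ('v list \<Rightarrow> bool) \<Rightarrow> nat \<Rightarrow> nat \<Rightarrow> nat \<Rightarrow> bool" where
  "bowditch_property E tight \<epsilon> k1 K1 \<longleftrightarrow> (\<forall>a b c g r.
      tight g \<and> hd g = a \<and> last g = b \<and> c \<in> set g \<and>
      gdist E a c \<ge> r + k1 \<and> gdist E b c \<ge> r + k1 \<longrightarrow>
      (let S = {v. \<exists>a' b' h. gdist E a a' \<le> r \<and> gdist E b b' \<le> r \<and> tight h \<and>
                 hd h = a' \<and> last h = b' \<and> v \<in> set h \<and> gdist E v c \<le> 2 * \<epsilon>}
       in finite S \<and> card S \<le> K1))"

definition channel ::
  "('v \<Rightarrow> 'v \<Rightarrow> bool) \<Rightarrow> ('v list \<Rightarrow> bool) \<Rightarrow> nat \<Rightarrow> nat \<Rightarrow> 'v \<Rightarrow> 'v \<Rightarrow> 'v list \<Rightarrow> bool" where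
  "channel E tight \<epsilon> L a b g1 \<longleftrightarrow> tight g1 \<and> length g1 = Suc L \<and>
     (\<exists>g2. tight g2 \<and> length g2 = Suc (3 * L) \<and> sublist g1 g2 \<and>
        gdist E a (hd g2) \<le> 2 * \<epsilon> \<and> gdist E b (last g2) \<le> 2 * \<epsilon> \<and>
        setdist E (hd g2) (set g1) = L \<and> setdist E (last g2) (set g1) = L)"

end

theory Submission
  imports Defs
begin

text \<open>Fix a tight geodesic g from a to b. A vertex v of an L-channel lies on a geodesic of
  length 3L whose ends are 2 eps-close to a and b and at distance at least L from v. Hence the
  path from a through v to b is longer than d(a,b) by at most 8 eps: either this makes it a
  1000 delta-quasi-geodesic, and stability puts v within eps of g, or delta \<le> eps/4 and the
  four-point condition does the same directly. Sliding the nearby vertex of g away from the ends,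
  v is within 2 eps of a vertex c of g at distance at least 2 eps + k1 from a and b, so by
  Bowditch's property v lies in a set of at most K1 vertices attached to c. All channels are
  therefore lists of length L + 1 over one set of at most (3L + 1) K1 vertices.\<close>

lemma card_UN_le_mult:
  assumes "finite I" "\<And>i. i \<in> I \<Longrightarrow> finite (A i) \<and> card (A i) \<le> k"
  shows "finite (\<Union>i\<in>I. A i) \<and> card (\<Union>i\<in>I. A i) \<le> card I * k"
proof
  show "finite (\<Union>i\<in>I. A i)" using assms by blast
  have "card (\<Union>i\<in>I. A i) \<le> (\<Sum>i\<in>I. card (A i))" by (rule card_UN_le[OF assms(1)])
  also have "\<dots> \<le> card I * k" using assms(2) sum_bounded_above[of I "\<lambda>i. card (A i)" k] by simp
  finally show "card (\<Union>i\<in>I. A i) \<le> card I * k" .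
qed

lemma finite_card_lists_le:
  assumes "finite T" "A \<subseteq> {xs. set xs \<subseteq> T \<and> length xs = n}"
  shows "finite A \<and> card A \<le> card T ^ n"
  using finite_subset[OF assms(2)] card_mono[OF _ assms(2)]
    finite_lists_length_eq[OF assms(1)] card_lists_length_eq[OF assms(1)]
  by simp

lemma walk_Cons_Cons: "walk E (x # y # xs) \<longleftrightarrow> E x y \<and> walk E (y # xs)"
  by (auto simp: walk_def nth_Cons split: nat.splits)

lemma walk_append_tl:
  assumes "walk E p" "walk E q" "last p = hd q"
  shows "walk E (p @ tl q)"
  using assms
proof (induction p rule: induct_list012)
  case 1
  then show ?case by (simp add: walk_def)
next
  case (2 x)
  then show ?case by (cases q) auto
next
  case (3 x y p)
  then show ?case by (simp add: walk_Cons_Cons)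
qed

lemma walk_rev:
  assumes sym: "\<And>x y. E x y \<Longrightarrow> E y x" and "walk E p"
  shows "walk E (rev p)"
proof -
  have "E (rev p ! i) (rev p ! Suc i)" if "Suc i < length p" for i
  proof -
    define m where "m = length p - Suc (Suc i)"
    have "E (p ! m) (p ! Suc m)" using assms(2) that unfolding walk_def m_def by auto
    moreover have "Suc m = length p - Suc i" using that unfolding m_def by simp
    ultimately show ?thesis using that by (simp add: rev_nth m_def sym)
  qed
  then show ?thesis using assms(2) by (simp add: walk_def)
qed

lemma walk_take_drop:
  assumes "walk E p" "i \<le> j" "j < length p"
  shows "walk E (take (Suc (j - i)) (drop i p))"
  using assms unfolding walk_def by (auto simp: nth_take nth_drop min_def)

lemma gdist_le_length:
  assumes "walk E p" "hd p = x" "last p = y"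
  shows "gdist E x y \<le> length p - 1"
proof -
  have "length p = Suc (length p - 1)" using assms(1) by (simp add: walk_def)
  then show ?thesis unfolding gdist_def using assms by (intro Least_le) blast
qed

lemma gdist_nth_le:
  assumes "walk E p" "i \<le> j" "j < length p"
  shows "gdist E (p ! i) (p ! j) \<le> j - i"
proof -
  let ?q = "take (Suc (j - i)) (drop i p)"
  have "length ?q = Suc (j - i)" using assms by auto
  moreover have "hd ?q = p ! i" using assms by (simp add: hd_drop_conv_nth hd_take)
  moreover have "last ?q = p ! j" using assms by (simp add: last_conv_nth)
  ultimately show ?thesis using gdist_le_length[OF walk_take_drop[OF assms]] by simp
qed

lemma geodesic_length:
  assumes "geodesic E g"
  shows "length g = Suc (gdist E (hd g) (last g))"
  using assms unfolding geodesic_def walk_def by (cases g) auto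

lemma setdist_le:
  assumes "finite S" "v \<in> S"
  shows "setdist E x S \<le> gdist E x v"
  using assms unfolding setdist_def by simp

locale graph_metric =
  fixes E :: "'v \<Rightarrow> 'v \<Rightarrow> bool"
  assumes sym: "\<And>x y. E x y \<Longrightarrow> E y x"
    and connected: "\<And>x y. \<exists>p. walk E p \<and> hd p = x \<and> last p = y"
begin

lemma shortest_walk:
  obtains p where "walk E p" "hd p = x" "last p = y" "length p = Suc (gdist E x y)"
proof -
  obtain p where p: "walk E p" "hd p = x" "last p = y" using connected by blast
  then have "\<exists>n p. walk E p \<and> hd p = x \<and> last p = y \<and> length p = Suc n"
    by (intro exI[of _ "length p - 1"] exI[of _ p]) (auto simp: walk_def)
  from LeastI_ex[OF this] show ?thesis using that unfolding gdist_def by blast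
qed

lemma walk_through:
  obtains p where "walk E p" "hd p = x" "last p = z" "y \<in> set p"
    "length p = Suc (gdist E x y + gdist E y z)"
proof -
  obtain p where p: "walk E p" "hd p = x" "last p = y" "length p = Suc (gdist E x y)"
    using shortest_walk .
  obtain q where q: "walk E q" "hd q = y" "last q = z" "length q = Suc (gdist E y z)"
    using shortest_walk .
  have "p \<noteq> []" "q \<noteq> []" using p q by (auto simp: walk_def)
  moreover have "last (p @ tl q) = z"
    using p q \<open>q \<noteq> []\<close> by (cases q) (auto simp: last_append)
  ultimately show ?thesis
    using that[OF walk_append_tl[OF p(1) q(1)]] p q last_in_set[of p] by simp
qed

lemma gdist_triangle: "gdist E x z \<le> gdist E x y + gdist E y z"
proof -
  obtain p where "walk E p" "hd p = x" "last p = z" "length p = Suc (gdist E x y + gdist E y z)"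
    using walk_through .
  then show ?thesis using gdist_le_length by fastforce
qed

lemma gdist_commute: "gdist E x y = gdist E y x"
proof -
  have le: "gdist E u w \<le> gdist E w u" for u w
  proof -
    obtain p where p: "walk E p" "hd p = w" "last p = u" "length p = Suc (gdist E w u)"
      using shortest_walk .
    then have "p \<noteq> []" by (simp add: walk_def)
    then show ?thesis using gdist_le_length[OF walk_rev[OF sym p(1)]] p
      by (simp add: hd_rev last_rev)
  qed
  show ?thesis using le[of x y] le[of y x] by simp
qed

lemma geodesic_gdist_nth:
  assumes g: "geodesic E g" and i: "i < length g"
  shows "gdist E (hd g) (g ! i) = i" "gdist E (g ! i) (last g) = length g - 1 - i"
proof -
  have w: "walk E g" using g by (simp add: geodesic_def)
  then have "g \<noteq> []" by (simp add: walk_def)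
  then have "gdist E (hd g) (g ! i) \<le> i" "gdist E (g ! i) (last g) \<le> length g - 1 - i"
    using gdist_nth_le[OF w, of 0 i] gdist_nth_le[OF w, of i "length g - 1"] i
    by (auto simp: hd_conv_nth last_conv_nth)
  moreover have "gdist E (hd g) (last g) \<le> gdist E (hd g) (g ! i) + gdist E (g ! i) (last g)"
    by (rule gdist_triangle)
  ultimately show "gdist E (hd g) (g ! i) = i" "gdist E (g ! i) (last g) = length g - 1 - i"
    using geodesic_length[OF g] i by linarith+
qed

lemma geodesic_gdist_sum:
  assumes "geodesic E g" "v \<in> set g"
  shows "gdist E (hd g) v + gdist E v (last g) = gdist E (hd g) (last g)"
  using assms geodesic_gdist_nth[OF assms(1)] geodesic_length[OF assms(1)]
  by (auto simp: in_set_conv_nth)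

lemma detour_le_near_geodesic:
  assumes v: "gdist E a' v + gdist E v b' = gdist E a' b'"
    and near: "gdist E a a' \<le> r" "gdist E b b' \<le> r"
  shows "gdist E a v + gdist E v b \<le> gdist E a b + 4 * r"
  using v near gdist_triangle[of a v a'] gdist_triangle[of v b b'] gdist_triangle[of a' b' a]
    gdist_triangle[of a b' b] gdist_commute[of a' a] gdist_commute[of b' b]
  by linarith

lemma geodesic_vertex_shift:
  assumes g: "geodesic E g" "hd g = a" "last g = b" and c: "c \<in> set g"
    and ma: "m \<le> gdist E a c + e" and mb: "m \<le> gdist E b c + e" and far: "2 * m \<le> gdist E a b"
  shows "\<exists>c'\<in>set g. m \<le> gdist E a c' \<and> m \<le> gdist E b c' \<and> gdist E c c' \<le> e"
proof -
  define D where "D = gdist E a b"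
  have len: "length g = Suc D" using geodesic_length[OF g(1)] g by (simp add: D_def)
  have pos: "gdist E a (g ! i) = i" "gdist E b (g ! i) = D - i" if "i \<le> D" for i
    using geodesic_gdist_nth[OF g(1), of i] that g len by (auto simp: gdist_commute)
  obtain t where t: "t \<le> D" "c = g ! t" using c len by (metis in_set_conv_nth less_Suc_eq_le)
  define t' where "t' = max m (min t (D - m))"
  have t': "m \<le> t'" "t' \<le> D - m" "t' \<le> t + e" "t \<le> t' + e"
    using ma mb far t(1) pos[OF t(1)] unfolding t(2) t'_def D_def by (auto simp: max_def min_def)
  have w: "walk E g" and t'_len: "t' < length g" using g(1) t' len by (simp_all add: geodesic_def)
  have "gdist E (g ! t) (g ! t') \<le> e"
  proof (cases "t \<le> t'")
    case True
    then show ?thesis using gdist_nth_le[OF w True t'_len] t' by linarith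
  next
    case False
    then show ?thesis using gdist_nth_le[of E g t' t] w t len t'
      by (simp add: gdist_commute)
  qed
  then show ?thesis using t' t'_len pos[of t'] t by (intro bexI[of _ "g ! t'"]) auto
qed

lemma walk_nth_gdist_ge:
  assumes p: "walk E p" "length p \<le> Suc (gdist E (hd p) (last p) + c)"
    and ij: "i \<le> j" "j < length p"
  shows "j - i \<le> gdist E (p ! i) (p ! j) + c"
proof -
  have "p \<noteq> []" using p by (simp add: walk_def)
  then have "gdist E (hd p) (p ! i) \<le> i" "gdist E (p ! j) (last p) \<le> length p - 1 - j"
    using gdist_nth_le[OF p(1), of 0 i] gdist_nth_le[OF p(1), of j "length p - 1"] ij
    by (auto simp: hd_conv_nth last_conv_nth)
  moreover have "gdist E (hd p) (last p)
      \<le> gdist E (hd p) (p ! i) + gdist E (p ! i) (p ! j) + gdist E (p ! j) (last p)"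
    using gdist_triangle[of "hd p" "last p" "p ! i"] gdist_triangle[of "p ! i" "last p" "p ! j"]
    by linarith
  ultimately show ?thesis using p(2) ij by linarith
qed

lemma quasi_geodesic_if_short_walk:
  assumes p: "walk E p" "length p \<le> Suc (gdist E (hd p) (last p) + c)"
    and lam: "1 \<le> lam" "real c \<le> lam\<^sup>2"
  shows "quasi_geodesic E lam p"
proof -
  have bounds: "real (gdist E (p ! i) (p ! j)) \<le> lam * \<bar>real i - real j\<bar> + lam \<and>
      \<bar>real i - real j\<bar> \<le> lam * (real (gdist E (p ! i) (p ! j)) + lam)"
    if ij: "i \<le> j" "j < length p" for i j
  proof -
    define x where "x = real (gdist E (p ! i) (p ! j))"
    define y where "y = real j - real i"
    have "x \<le> y" "y \<le> x + real c"
      using gdist_nth_le[OF p(1) ij] walk_nth_gdist_ge[OF p ij] ij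
      unfolding x_def y_def by (simp_all add: of_nat_diff)
    moreover have "0 \<le> x" by (simp add: x_def)
    moreover have "x \<le> lam * x" "y \<le> lam * y"
      using mult_right_mono[OF lam(1), of x] mult_right_mono[OF lam(1), of y] \<open>x \<le> y\<close> \<open>0 \<le> x\<close>
      by simp_all
    moreover have "lam * (x + lam) = lam * x + lam\<^sup>2" by (simp add: algebra_simps power2_eq_square)
    moreover have "\<bar>real i - real j\<bar> = y" using ij by (simp add: y_def)
    ultimately show ?thesis using lam unfolding x_def[symmetric] by auto
  qed
  show ?thesis
    unfolding quasi_geodesic_def
  proof (intro conjI allI impI)
    show "p \<noteq> []" using p by (simp add: walk_def)
    fix i j assume "i < length p \<and> j < length p"
    then show "real (gdist E (p ! i) (p ! j)) \<le> lam * \<bar>real i - real j\<bar> + lam"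
      "\<bar>real i - real j\<bar> \<le> lam * (real (gdist E (p ! i) (p ! j)) + lam)"
      using bounds[of i j] bounds[of j i] gdist_commute[of "p ! i" "p ! j"]
      by (cases "i \<le> j"; simp add: abs_minus_commute)+
  qed
qed

end

locale hyperbolic_graph = graph_metric +
  fixes \<delta> :: nat
  assumes hyperbolic: "gromov_hyperbolic E \<delta>"
begin

lemma four_point:
  "gdist E x y + gdist E z w
     \<le> max (gdist E x z + gdist E y w) (gdist E x w + gdist E y z) + 2 * \<delta>"
  using hyperbolic unfolding gromov_hyperbolic_def by blast

lemma small_detour_near_geodesic:
  assumes g: "geodesic E g" "hd g = a" "last g = b"
    and detour: "gdist E a v + gdist E v b \<le> gdist E a b + 4 * \<delta>"
  shows "\<exists>c\<in>set g. gdist E v c \<le> 4 * \<delta>"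
proof -
  define D where "D = gdist E a b"
  define A where "A = gdist E a v"
  define B where "B = gdist E b v"
  have len: "length g = Suc D" using geodesic_length[OF g(1)] g by (simp add: D_def)
  have "B \<le> A + D" "A \<le> D + B"
    using gdist_triangle[of b v a] gdist_triangle[of a v b] gdist_commute[of a b]
    unfolding A_def B_def D_def by linarith+
  define t where "t = (A + D - B) div 2"
  have t: "t < length g" "2 * t \<le> A + D - B" "A + D - B \<le> 2 * t + 1"
    using \<open>B \<le> A + D\<close> \<open>A \<le> D + B\<close> len unfolding t_def by auto
  have pos: "gdist E a (g ! t) = t" "gdist E b (g ! t) = D - t"
    using geodesic_gdist_nth[OF g(1) t(1)] g len by (auto simp: gdist_commute)
  text \<open>t is the Gromov product (v|b) at a, so g ! t is the centre of the triangle a b v on g.\<close>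
  have "gdist E a b + gdist E v (g ! t)
      \<le> max (gdist E a v + gdist E b (g ! t)) (gdist E a (g ! t) + gdist E b v) + 2 * \<delta>"
    by (rule four_point)
  then have "gdist E v (g ! t) \<le> 4 * \<delta>"
    using detour t pos \<open>B \<le> A + D\<close> \<open>A \<le> D + B\<close> gdist_commute[of v b]
    unfolding A_def[symmetric] B_def[symmetric] D_def[symmetric] max_def
    by (auto split: if_splits)
  then show ?thesis using t(1) by (intro bexI[of _ "g ! t"]) auto
qed

lemma detour_le_if_far_from_ends:
  assumes v: "gdist E a' v + gdist E v b' = gdist E a' b'"
    and near: "gdist E a a' \<le> r" "gdist E b b' \<le> r"
    and far: "r + 4 * \<delta> < gdist E a' v" "r + 4 * \<delta> < gdist E b' v"
  shows "gdist E a v + gdist E v b \<le> gdist E a b + 4 * \<delta>"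
proof -
  have "gdist E a' b' + gdist E a v
      \<le> max (gdist E a' a + gdist E b' v) (gdist E a' v + gdist E b' a) + 2 * \<delta>"
    by (rule four_point)
  then have near_b': "gdist E a v + gdist E v b' \<le> gdist E a b' + 2 * \<delta>"
    using v near far gdist_commute[of a' a] gdist_commute[of b' v] gdist_commute[of b' a]
    by (auto simp: max_def split: if_splits)
  have "gdist E a b' + gdist E b v
      \<le> max (gdist E a b + gdist E b' v) (gdist E a v + gdist E b' b) + 2 * \<delta>"
    by (rule four_point)
  then show ?thesis
    using near_b' near far gdist_commute[of b' v] gdist_commute[of b' b] gdist_commute[of b v]
    by (auto simp: max_def split: if_splits)
qed

end

definition near_tight_vertices ::
  "('v \<Rightarrow> 'v \<Rightarrow> bool) \<Rightarrow> ('v list \<Rightarrow> bool) \<Rightarrow> nat \<Rightarrow> nat \<Rightarrow> 'v \<Rightarrow> 'v \<Rightarrow> 'v \<Rightarrow> 'v set" where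
  "near_tight_vertices E tight r e a b c = {v. \<exists>a' b' h. gdist E a a' \<le> r \<and> gdist E b b' \<le> r \<and>
     tight h \<and> hd h = a' \<and> last h = b' \<and> v \<in> set h \<and> gdist E v c \<le> e}"

lemma bowditch_property_card:
  assumes "bowditch_property E tight \<epsilon> k1 K1"
    and "tight g" "hd g = a" "last g = b" "c \<in> set g"
    and "r + k1 \<le> gdist E a c" "r + k1 \<le> gdist E b c"
  shows "finite (near_tight_vertices E tight r (2 * \<epsilon>) a b c)
    \<and> card (near_tight_vertices E tight r (2 * \<epsilon>) a b c) \<le> K1"
  using assms(1)[unfolded bowditch_property_def, rule_format, of g a b c r] assms(2-)
  unfolding near_tight_vertices_def Let_def by blast

locale stable_hyperbolic_graph = hyperbolic_graph +
  fixes \<epsilon> :: nat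
  assumes eps_pos: "0 < \<epsilon>"
    and stable: "qg_stable E (1000 * real \<delta>) \<epsilon>"
begin

text \<open>If the stability constant is small compared to the quasi-geodesic constant, the detour
  through v is a quasi-geodesic; otherwise the hyperbolicity constant is small compared to
  eps and the four-point condition applies directly.\<close>
lemma far_vertex_near_geodesic:
  assumes g2: "geodesic E g2" "v \<in> set g2"
    and near: "gdist E a (hd g2) \<le> 2 * \<epsilon>" "gdist E b (last g2) \<le> 2 * \<epsilon>"
    and far: "4 * \<epsilon> \<le> gdist E (hd g2) v" "4 * \<epsilon> \<le> gdist E (last g2) v"
    and g: "geodesic E g" "hd g = a" "last g = b"
  shows "\<exists>c\<in>set g. gdist E v c \<le> \<epsilon>"
proof (cases "1 \<le> \<delta> \<and> 8 * \<epsilon> \<le> (1000 * \<delta>)\<^sup>2")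
  case True
  have on_g2: "gdist E (hd g2) v + gdist E v (last g2) = gdist E (hd g2) (last g2)"
    using geodesic_gdist_sum[OF g2] .
  obtain p where p: "walk E p" "hd p = a" "last p = b" "v \<in> set p"
    "length p = Suc (gdist E a v + gdist E v b)"
    using walk_through .
  have "length p \<le> Suc (gdist E (hd p) (last p) + 8 * \<epsilon>)"
    using detour_le_near_geodesic[OF on_g2 near] p by simp
  moreover have "1 \<le> 1000 * real \<delta>" "real (8 * \<epsilon>) \<le> (1000 * real \<delta>)\<^sup>2"
    using True of_nat_le_iff[where 'a=real, of "8 * \<epsilon>" "(1000 * \<delta>)\<^sup>2"] by simp_all
  ultimately have "quasi_geodesic E (1000 * real \<delta>) p"
    using quasi_geodesic_if_short_walk[OF p(1)] by blast
  then show ?thesis using stable[unfolded qg_stable_def, rule_format, of p g] g p by auto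
next
  case False
  have "4 * \<delta> \<le> \<epsilon>"
  proof (cases "\<delta> = 0")
    case False
    then have "32 * \<delta> \<le> (1000 * \<delta>)\<^sup>2" by (simp add: power2_eq_square)
    then show ?thesis using \<open>\<not> (1 \<le> \<delta> \<and> 8 * \<epsilon> \<le> (1000 * \<delta>)\<^sup>2)\<close> False by linarith
  qed simp
  then have "gdist E a v + gdist E v b \<le> gdist E a b + 4 * \<delta>"
    using detour_le_if_far_from_ends[OF geodesic_gdist_sum[OF g2] near] far eps_pos by linarith
  then show ?thesis using small_detour_near_geodesic[OF g] \<open>4 * \<delta> \<le> \<epsilon>\<close> order_trans by blast
qed

lemma channel_vertex_near_tight:
  assumes tight_geod: "\<And>g. tight g \<Longrightarrow> geodesic E g" and L: "k1 + 4 * \<epsilon> \<le> L"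
    and channel: "channel E tight \<epsilon> L a b g1" and v: "v \<in> set g1"
    and g: "geodesic E g" "hd g = a" "last g = b"
  shows "\<exists>c\<in>set g. 2 * \<epsilon> + k1 \<le> gdist E a c \<and> 2 * \<epsilon> + k1 \<le> gdist E b c \<and>
    v \<in> near_tight_vertices E tight (2 * \<epsilon>) (2 * \<epsilon>) a b c"
proof -
  obtain g2 where g2: "tight g2" "length g2 = Suc (3 * L)" "sublist g1 g2"
    and near: "gdist E a (hd g2) \<le> 2 * \<epsilon>" "gdist E b (last g2) \<le> 2 * \<epsilon>"
    and sd: "setdist E (hd g2) (set g1) = L" "setdist E (last g2) (set g1) = L"
    using channel unfolding channel_def by blast
  have g2_geod: "geodesic E g2" and v2: "v \<in> set g2"
    using tight_geod[OF g2(1)] set_mono_sublist[OF g2(3)] v by auto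
  have far: "L \<le> gdist E (hd g2) v" "L \<le> gdist E (last g2) v"
    using setdist_le[of "set g1" v E "hd g2"] setdist_le[of "set g1" v E "last g2"] sd v
    by (simp_all only: List.finite_set)
  obtain c0 where c0: "c0 \<in> set g" "gdist E v c0 \<le> \<epsilon>"
    using far_vertex_near_geodesic[OF g2_geod v2 near _ _ g] far L by auto
  have "3 * L \<le> gdist E a b + 4 * \<epsilon>"
    using geodesic_length[OF g2_geod] g2(2) near gdist_triangle[of "hd g2" "last g2" a]
      gdist_triangle[of a "last g2" b] gdist_commute[of a "hd g2"] by simp
  moreover have "L \<le> gdist E a c0 + 3 * \<epsilon>" "L \<le> gdist E b c0 + 3 * \<epsilon>"
    using far near c0 gdist_triangle[of "hd g2" v a] gdist_triangle[of a v c0]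
      gdist_triangle[of "last g2" v b] gdist_triangle[of b v c0]
      gdist_commute[of a "hd g2"] gdist_commute[of b "last g2"] gdist_commute[of v c0]
    by linarith+
  ultimately obtain c where c: "c \<in> set g" "2 * \<epsilon> + k1 \<le> gdist E a c"
    "2 * \<epsilon> + k1 \<le> gdist E b c" "gdist E c0 c \<le> \<epsilon>"
    using geodesic_vertex_shift[OF g c0(1), of "2 * \<epsilon> + k1" \<epsilon>] L by auto
  have "gdist E v c \<le> 2 * \<epsilon>" using gdist_triangle[of v c c0] c0 c by linarith
  then show ?thesis
    using c g2(1) near v2 unfolding near_tight_vertices_def by blast
qed

end

theorem lemma1p8:
  fixes E :: "'v \<Rightarrow> 'v \<Rightarrow> bool"
    and tight :: "'v list \<Rightarrow> bool"
    and \<delta> \<epsilon> k1 K1 L :: nat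
  assumes sym: "\<And>x y. E x y \<Longrightarrow> E y x"
    and irrefl: "\<And>x. \<not> E x x"
    and connected: "\<And>x y. \<exists>p. walk E p \<and> hd p = x \<and> last p = y"
    and tight_geod: "\<And>g. tight g \<Longrightarrow> geodesic E g"
    and tight_exists: "\<And>x y. \<exists>g. tight g \<and> hd g = x \<and> last g = y"
    and tight_sub: "\<And>g h. tight g \<Longrightarrow> h \<noteq> [] \<Longrightarrow> sublist h g \<Longrightarrow> tight h"
    and tight_rev: "\<And>g. tight g \<Longrightarrow> tight (rev g)"
    and hyp: "gromov_hyperbolic E \<delta>"
    and eps_pos: "\<epsilon> > 0"
    and stable: "qg_stable E (1000 * real \<delta>) \<epsilon>"
    and bowditch: "bowditch_property E tight \<epsilon> k1 K1"
    and L: "L \<ge> k1 + 4 * \<epsilon>"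
  shows "\<exists>\<kappa>::nat. \<forall>a b. gdist E a b \<le> 3 * L \<longrightarrow>
           finite {g1. channel E tight \<epsilon> L a b g1} \<and>
           card {g1. channel E tight \<epsilon> L a b g1} \<le> \<kappa>"
proof (intro exI allI impI)
  interpret stable_hyperbolic_graph E \<delta> \<epsilon>
    using sym connected hyp eps_pos stable by unfold_locales
  fix a b assume dab: "gdist E a b \<le> 3 * L"
  obtain g where g: "tight g" "hd g = a" "last g = b" using tight_exists by blast
  define I where "I = {c \<in> set g. 2 * \<epsilon> + k1 \<le> gdist E a c \<and> 2 * \<epsilon> + k1 \<le> gdist E b c}"
  define T where "T = (\<Union>c\<in>I. near_tight_vertices E tight (2 * \<epsilon>) (2 * \<epsilon>) a b c)"
  have "card I \<le> 3 * L + 1"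
    using card_mono[of "set g" I] card_length[of g] geodesic_length[OF tight_geod[OF g(1)]] g dab
    unfolding I_def by fastforce
  moreover have "finite I" unfolding I_def by simp
  moreover have "finite (near_tight_vertices E tight (2 * \<epsilon>) (2 * \<epsilon>) a b c) \<and>
      card (near_tight_vertices E tight (2 * \<epsilon>) (2 * \<epsilon>) a b c) \<le> K1" if "c \<in> I" for c
    using bowditch_property_card[OF bowditch g, of c "2 * \<epsilon>"] that unfolding I_def by auto
  ultimately have T: "finite T \<and> card T \<le> (3 * L + 1) * K1"
    using card_UN_le_mult[of I] mult_le_mono1[of "card I"] unfolding T_def by (meson le_trans)
  have "{g1. channel E tight \<epsilon> L a b g1} \<subseteq> {xs. set xs \<subseteq> T \<and> length xs = Suc L}"
    using channel_vertex_near_tight[OF tight_geod L _ _ tight_geod[OF g(1)] g(2,3)]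
    unfolding T_def I_def channel_def by blast
  then show "finite {g1. channel E tight \<epsilon> L a b g1} \<and>
      card {g1. channel E tight \<epsilon> L a b g1} \<le> ((3 * L + 1) * K1) ^ Suc L"
    using finite_card_lists_le[of T] T power_mono[of "card T"] by (meson le_trans zero_le)
qed

end
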